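(* Let $\alpha,\beta$ satisfy $\alpha+\beta=-1$. For every $n\geq1$, $$\sum_{\sigma\in\mathfrak S_{n+1}}u^{{\rm M}(\sigma)}\alpha^{{\rm LRmin}(\sigma)-1}\beta^{{\rm RLmin}(\sigma)-1}=\begin{cases}(1-u)^{\lfloor n/2\rfloor},& n\text{ even},\\ -(1-u)^{\lfloor n/2\rfloor},& n\text{ odd}.\end{cases}$$
   Context: For $\sigma=\sigma_1\cdots\sigma_m\in\mathfrak S_m$: ${\rm M}(\sigma)$ (interior peaks) is the number of $i$ with $1<i<m$ and $\sigma_{i-1}<\sigma_i>\sigma_{i+1}$; ${\rm LRmin}(\sigma)$ is the number of $i$ with $\sigma_j>\sigma_i$ for all $j<i$; ${\rm RLmin}(\sigma)$ is the number of $i$ with $\sigma_j>\sigma_i$ for all $j>i$. *)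

theory Defs
  imports "HOL-Combinatorics.Combinatorics"
begin

text \<open>Permutations of {1..m} are represented as lists (one-line notation),
  positions are 0-indexed.\<close>

definition peaks :: "nat list \<Rightarrow> nat" where
  "peaks xs = card {i. 0 < i \<and> i + 1 < length xs \<and>
      xs ! (i - 1) < xs ! i \<and> xs ! (i + 1) < xs ! i}"

definition lrmin :: "nat list \<Rightarrow> nat" where
  "lrmin xs = card {i. i < length xs \<and> (\<forall>j<i. xs ! i < xs ! j)}"

definition rlmin :: "nat list \<Rightarrow> nat" where
  "rlmin xs = card {i. i < length xs \<and>
      (\<forall>j. i < j \<and> j < length xs \<longrightarrow> xs ! i < xs ! j)}"

end

theory Submission
  imports Defs
begin

text \<open>Build a permutation of \<open>{1..n+1}\<close> by inserting \<open>n+1\<close> into one of the \<open>n+1\<close> slots of a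
  permutation of \<open>{1..n}\<close> with \<open>p\<close> peaks. Inserting it in front creates one new left-to-right
  minimum, inserting it at the end one new right-to-left minimum, and neither changes the peaks.
  An interior insertion keeps all records; it leaves the number of peaks unchanged in the \<open>2p\<close>
  slots next to a peak and raises it by one in the remaining \<open>n - 1 - 2p\<close> slots. Hence the
  \<open>\<alpha>,\<beta>\<close>-weighted number \<open>N\<^sub>n(p)\<close> of permutations with \<open>p\<close> peaks satisfies
  \<open>N\<^sub>n\<^sub>+\<^sub>1(p) = (\<alpha> + \<beta> + 2p) N\<^sub>n(p) + (n + 1 - 2p) N\<^sub>n(p - 1)\<close>.
  For \<open>\<alpha> + \<beta> = -1\<close> this recurrence is solved by
  \<open>N\<^sub>n\<^sub>+\<^sub>1(p) = (-1)\<^bsup>n+p\<^esup> (\<lfloor>n/2\<rfloor> choose p)\<close>, and the binomial theorem sums it to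
  \<open>(-1)\<^sup>n (1 - u)\<^bsup>\<lfloor>n/2\<rfloor>\<^esup>\<close>.\<close>

definition insert_at :: "nat \<Rightarrow> 'a \<Rightarrow> 'a list \<Rightarrow> 'a list" where
  "insert_at i x xs = take i xs @ x # drop i xs"

text \<open>Position of the old entry \<open>j\<close> after an insertion at position \<open>i\<close>, and its inverse.\<close>

definition shift :: "nat \<Rightarrow> nat \<Rightarrow> nat" where
  "shift i j = (if j < i then j else Suc j)"

definition unshift :: "nat \<Rightarrow> nat \<Rightarrow> nat" where
  "unshift i j = (if j < i then j else j - 1)"

lemma length_insert_at [simp]: "i \<le> length xs \<Longrightarrow> length (insert_at i x xs) = Suc (length xs)"
  by (simp add: insert_at_def)

lemma set_insert_at [simp]: "set (insert_at i x xs) = insert x (set xs)"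
proof -
  obtain ys zs where "take i xs = ys" "drop i xs = zs" "xs = ys @ zs"
    by (metis append_take_drop_id)
  then show ?thesis by (auto simp: insert_at_def)
qed

lemma distinct_insert_at [simp]: "distinct (insert_at i x xs) \<longleftrightarrow> distinct xs \<and> x \<notin> set xs"
proof -
  obtain ys zs where "take i xs = ys" "drop i xs = zs" "xs = ys @ zs"
    by (metis append_take_drop_id)
  then show ?thesis by (auto simp: insert_at_def)
qed

lemma nth_insert_at:
  assumes "i \<le> length xs" "j \<le> length xs"
  shows "insert_at i x xs ! j = (if j < i then xs ! j else if j = i then x else xs ! (j - 1))"
  using assms by (auto simp: insert_at_def nth_append min_def nth_Cons' not_less)

lemma nth_insert_at_self [simp]: "i \<le> length xs \<Longrightarrow> insert_at i x xs ! i = x"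
  by (simp add: nth_insert_at)

lemma nth_insert_at_shift [simp]:
  "i \<le> length xs \<Longrightarrow> j < length xs \<Longrightarrow> insert_at i x xs ! shift i j = xs ! j"
  by (auto simp: nth_insert_at shift_def)

lemma nth_insert_at_unshift:
  "j \<noteq> i \<Longrightarrow> i \<le> length xs \<Longrightarrow> j \<le> length xs \<Longrightarrow> insert_at i x xs ! j = xs ! unshift i j"
  by (auto simp: nth_insert_at unshift_def)

lemma shift_unshift [simp]: "j \<noteq> i \<Longrightarrow> shift i (unshift i j) = j"
  by (auto simp: shift_def unshift_def)

lemma unshift_less: "j \<noteq> i \<Longrightarrow> j < Suc n \<Longrightarrow> i \<le> n \<Longrightarrow> unshift i j < n"
  by (auto simp: unshift_def)

lemma shift_less_shift_iff [simp]: "shift i j < shift i j' \<longleftrightarrow> j < j'"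
  by (auto simp: shift_def)

lemma shift_less: "j < n \<Longrightarrow> shift i j < Suc n"
  by (auto simp: shift_def)

lemma inj_on_shift: "inj_on (shift i) A"
  by (auto simp: inj_on_def shift_def split: if_splits)

lemma card_shift_image [simp]: "card (shift i ` A) = card A"
  by (simp add: card_image inj_on_shift)

lemma insert_at_inject:
  assumes eq: "insert_at i x xs = insert_at j x ys" and "x \<notin> set xs" "x \<notin> set ys"
    and i: "i \<le> length xs" and j: "j \<le> length ys"
  shows "i = j \<and> xs = ys"
proof -
  have "i = j"
  proof (rule ccontr)
    assume "i \<noteq> j"
    then consider "i < j" | "j < i" by linarith
    then show False
    proof cases
      case 1
      then have "insert_at j x ys ! i = ys ! i" "ys ! i \<in> set ys"
        using j by (simp_all add: nth_insert_at)
      then show False using eq nth_insert_at_self[OF i, of x] \<open>x \<notin> set ys\<close> by metis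
    next
      case 2
      then have "insert_at i x xs ! j = xs ! j" "xs ! j \<in> set xs"
        using i by (simp_all add: nth_insert_at)
      then show False using eq nth_insert_at_self[OF j, of x] \<open>x \<notin> set xs\<close> by metis
    qed
  qed
  moreover have "length xs = length ys"
    using arg_cong[OF eq, of length] i j by simp
  ultimately show ?thesis
    using eq i j by (auto simp: insert_at_def append_eq_append_conv min_def)
      (metis append_take_drop_id)
qed

section \<open>Records and peaks after inserting a maximum\<close>

definition lrmin_set :: "nat list \<Rightarrow> nat set" where
  "lrmin_set xs = {i. i < length xs \<and> (\<forall>j<i. xs ! i < xs ! j)}"

definition rlmin_set :: "nat list \<Rightarrow> nat set" where
  "rlmin_set xs = {i. i < length xs \<and> (\<forall>j. i < j \<and> j < length xs \<longrightarrow> xs ! i < xs ! j)}"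

definition peak_set :: "nat list \<Rightarrow> nat set" where
  "peak_set xs = {i. 0 < i \<and> i + 1 < length xs \<and> xs ! (i - 1) < xs ! i \<and> xs ! (i + 1) < xs ! i}"

lemma lrmin_eq_card: "lrmin xs = card (lrmin_set xs)"
  by (simp add: lrmin_def lrmin_set_def)

lemma rlmin_eq_card: "rlmin xs = card (rlmin_set xs)"
  by (simp add: rlmin_def rlmin_set_def)

lemma peaks_eq_card: "peaks xs = card (peak_set xs)"
  by (simp add: peaks_def peak_set_def)

lemma finite_lrmin_set [simp]: "finite (lrmin_set xs)"
  by (simp add: lrmin_set_def)

lemma finite_rlmin_set [simp]: "finite (rlmin_set xs)"
  by (simp add: rlmin_set_def)

lemma finite_peak_set [simp]: "finite (peak_set xs)"
  by (rule finite_subset[of _ "{..<length xs}"]) (auto simp: peak_set_def)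

lemma lrmin_pos: "xs \<noteq> [] \<Longrightarrow> 0 < lrmin xs"
  unfolding lrmin_eq_card by (rule card_gt_0_iff[THEN iffD2]) (auto simp: lrmin_set_def)

lemma rlmin_pos: "xs \<noteq> [] \<Longrightarrow> 0 < rlmin xs"
  unfolding rlmin_eq_card
  by (rule card_gt_0_iff[THEN iffD2]) (auto simp: rlmin_set_def intro!: exI[of _ "length xs - 1"])

lemma peak_set_bounds: "j \<in> peak_set xs \<Longrightarrow> 0 < j \<and> j + 1 < length xs"
  by (auto simp: peak_set_def)

lemma Suc_notin_peak_set: "j \<in> peak_set xs \<Longrightarrow> Suc j \<notin> peak_set xs"
  by (auto simp: peak_set_def)

lemma lrmin_set_insert_max:
  assumes i: "i \<le> length xs" and m: "\<forall>x\<in>set xs. x < m"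
  shows "lrmin_set (insert_at i m xs) = shift i ` lrmin_set xs \<union> (if i = 0 then {0} else {})"
proof (intro equalityI subsetI)
  fix x assume x: "x \<in> lrmin_set (insert_at i m xs)"
  show "x \<in> shift i ` lrmin_set xs \<union> (if i = 0 then {0} else {})"
  proof (cases "x = i")
    case True
    show ?thesis
    proof (cases "i = 0")
      case False
      then have "insert_at i m xs ! x < insert_at i m xs ! 0" using x True by (auto simp: lrmin_set_def)
      moreover have "xs ! 0 \<in> set xs" using False i by (intro nth_mem) auto
      ultimately show ?thesis using False True i m by (auto simp: nth_insert_at)
    qed (use True in auto)
  next
    case False
    have xl: "x < Suc (length xs)" using x i by (auto simp: lrmin_set_def)
    note ux = unshift_less[OF False xl i]
    have "unshift i x \<in> lrmin_set xs"
      unfolding lrmin_set_def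
    proof (intro CollectI conjI allI impI)
      fix z assume z: "z < unshift i x"
      then have "shift i z < x" using shift_less_shift_iff[of i z "unshift i x"] False by simp
      then have "insert_at i m xs ! x < insert_at i m xs ! shift i z" using x by (auto simp: lrmin_set_def)
      then show "xs ! unshift i x < xs ! z"
        using nth_insert_at_shift[OF i, of "unshift i x" m] nth_insert_at_shift[OF i, of z m] False ux z
        by simp
    qed (fact ux)
    then show ?thesis using shift_unshift[OF False] by (metis UnI1 image_eqI)
  qed
next
  fix x assume x: "x \<in> shift i ` lrmin_set xs \<union> (if i = 0 then {0} else {})"
  show "x \<in> lrmin_set (insert_at i m xs)"
  proof (cases "x \<in> shift i ` lrmin_set xs")
    case True
    then obtain j where j: "j \<in> lrmin_set xs" "x = shift i j" by auto
    have jl: "j < length xs" using j by (auto simp: lrmin_set_def)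
    show ?thesis unfolding lrmin_set_def
    proof (intro CollectI conjI allI impI)
      show "x < length (insert_at i m xs)" using j i shift_less[OF jl] by simp
      fix y assume y: "y < x"
      show "insert_at i m xs ! x < insert_at i m xs ! y"
      proof (cases "y = i")
        case True
        then show ?thesis using j i m jl by simp
      next
        case False
        have yl: "y < Suc (length xs)" using y shift_less[OF jl, of i] j by simp
        have "unshift i y < j" using y j False shift_less_shift_iff[of i "unshift i y" j] by simp
        then have "xs ! j < xs ! unshift i y" using j by (auto simp: lrmin_set_def)
        then show ?thesis using i jl yl False j by (simp add: nth_insert_at_unshift)
      qed
    qed
  next
    case False
    then show ?thesis using x by (auto simp: lrmin_set_def split: if_splits)
  qed
qed

lemma rlmin_set_insert_max:
  assumes i: "i \<le> length xs" and m: "\<forall>x\<in>set xs. x < m"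
  shows "rlmin_set (insert_at i m xs) = shift i ` rlmin_set xs \<union> (if i = length xs then {i} else {})"
proof (intro equalityI subsetI)
  fix x assume x: "x \<in> rlmin_set (insert_at i m xs)"
  show "x \<in> shift i ` rlmin_set xs \<union> (if i = length xs then {i} else {})"
  proof (cases "x = i")
    case True
    show ?thesis
    proof (cases "i = length xs")
      case False
      then have "insert_at i m xs ! x < insert_at i m xs ! Suc i"
        using x True i by (auto simp: rlmin_set_def)
      then have "m < xs ! i" using True False i by (auto simp: nth_insert_at)
      moreover have "xs ! i < m" using m False i by simp
      ultimately show ?thesis by simp
    qed (use True in auto)
  next
    case False
    have xl: "x < Suc (length xs)" using x i by (auto simp: rlmin_set_def)
    note ux = unshift_less[OF False xl i]
    have "unshift i x \<in> rlmin_set xs"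
      unfolding rlmin_set_def
    proof (intro CollectI conjI allI impI)
      fix z assume z: "unshift i x < z \<and> z < length xs"
      then have "x < shift i z" using shift_less_shift_iff[of i "unshift i x" z] False by simp
      moreover have "shift i z < length (insert_at i m xs)" using z shift_less[of z "length xs" i] i by simp
      ultimately have "insert_at i m xs ! x < insert_at i m xs ! shift i z" using x by (auto simp: rlmin_set_def)
      then show "xs ! unshift i x < xs ! z"
        using nth_insert_at_shift[OF i, of "unshift i x" m] nth_insert_at_shift[OF i, of z m] False ux z
        by simp
    qed (fact ux)
    then show ?thesis using shift_unshift[OF False] by (metis UnI1 image_eqI)
  qed
next
  fix x assume x: "x \<in> shift i ` rlmin_set xs \<union> (if i = length xs then {i} else {})"
  show "x \<in> rlmin_set (insert_at i m xs)"
  proof (cases "x \<in> shift i ` rlmin_set xs")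
    case True
    then obtain j where j: "j \<in> rlmin_set xs" "x = shift i j" by auto
    have jl: "j < length xs" using j by (auto simp: rlmin_set_def)
    show ?thesis unfolding rlmin_set_def
    proof (intro CollectI conjI allI impI)
      show "x < length (insert_at i m xs)" using j i shift_less[OF jl] by simp
      fix y assume y: "x < y \<and> y < length (insert_at i m xs)"
      show "insert_at i m xs ! x < insert_at i m xs ! y"
      proof (cases "y = i")
        case True
        then show ?thesis using j i m jl by simp
      next
        case False
        have yl: "y < Suc (length xs)" using y i by simp
        have "j < unshift i y" using y j False shift_less_shift_iff[of i j "unshift i y"] by simp
        then have "xs ! j < xs ! unshift i y" using j unshift_less[OF False yl i] by (auto simp: rlmin_set_def)
        then show ?thesis using i jl yl False j by (simp add: nth_insert_at_unshift)
      qed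
    qed
  next
    case False
    then have "x = i" "i = length xs" using x by (auto split: if_splits)
    then show ?thesis using i by (auto simp: rlmin_set_def nth_insert_at)
  qed
qed

lemma peak_set_insert_max:
  assumes i: "i \<le> length xs" and m: "\<forall>x\<in>set xs. x < m"
  shows "peak_set (insert_at i m xs) =
    shift i ` (peak_set xs - {i - 1, i}) \<union> (if 0 < i \<and> i < length xs then {i} else {})"
proof (intro equalityI subsetI)
  fix x assume x: "x \<in> peak_set (insert_at i m xs)"
  have x0: "0 < x" and xl: "x + 1 \<le> length xs"
    and left: "insert_at i m xs ! (x - 1) < insert_at i m xs ! x"
    and right: "insert_at i m xs ! (x + 1) < insert_at i m xs ! x"
    using x i by (auto simp: peak_set_def)
  show "x \<in> shift i ` (peak_set xs - {i - 1, i}) \<union> (if 0 < i \<and> i < length xs then {i} else {})"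
  proof (cases "x = i")
    case True
    then show ?thesis using x0 xl by auto
  next
    case False
    have "insert_at i m xs ! x = xs ! unshift i x"
      using False i xl by (simp add: nth_insert_at_unshift)
    moreover have "unshift i x < length xs" using unshift_less[OF False _ i] xl by simp
    ultimately have "insert_at i m xs ! x < m" using m by simp
    then have "x - 1 \<noteq> i" "x + 1 \<noteq> i" using left right i by auto
    with False x0 have nb: "unshift i (x - 1) = unshift i x - 1" "unshift i (x + 1) = unshift i x + 1"
      "0 < unshift i x" "unshift i x \<noteq> i" "unshift i x + 1 \<noteq> i" "unshift i x + 1 < length xs"
      using xl i by (auto simp: unshift_def)
    have "unshift i x \<in> peak_set xs"
      using left right False \<open>x - 1 \<noteq> i\<close> \<open>x + 1 \<noteq> i\<close> nb i xl
      by (simp add: peak_set_def nth_insert_at_unshift)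
    then have "unshift i x \<in> peak_set xs - {i - 1, i}"
      using nb by auto
    then show ?thesis using shift_unshift[OF False] by (metis UnI1 image_eqI)
  qed
next
  fix x assume x: "x \<in> shift i ` (peak_set xs - {i - 1, i}) \<union> (if 0 < i \<and> i < length xs then {i} else {})"
  show "x \<in> peak_set (insert_at i m xs)"
  proof (cases "x \<in> shift i ` (peak_set xs - {i - 1, i})")
    case True
    then obtain j where j: "j \<in> peak_set xs" "j \<noteq> i - 1" "j \<noteq> i" and x_eq: "x = shift i j"
      by auto
    then have "0 < j" "j + 1 < length xs" "xs ! (j - 1) < xs ! j" "xs ! (j + 1) < xs ! j"
      by (auto simp: peak_set_def)
    moreover have "shift i j - 1 = shift i (j - 1)" "shift i j + 1 = shift i (j + 1)" "0 < shift i j"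
      using j \<open>0 < j\<close> by (auto simp: shift_def)
    moreover have "shift i (j + 1) < Suc (length xs)" using shift_less \<open>j + 1 < length xs\<close> by blast
    ultimately show ?thesis
      using i unfolding x_eq peak_set_def by simp
  next
    case False
    then have xi: "x = i" "0 < i" "i < length xs" using x by (auto split: if_splits)
    have "xs ! (i - 1) \<in> set xs" "xs ! i \<in> set xs" using xi by auto
    then show ?thesis using xi i m by (auto simp: peak_set_def nth_insert_at)
  qed
qed

lemma lrmin_insert_max:
  assumes "i \<le> length xs" "\<forall>x\<in>set xs. x < m"
  shows "lrmin (insert_at i m xs) = lrmin xs + (if i = 0 then 1 else 0)"
proof (cases "i = 0")
  case True
  moreover have "0 \<notin> shift 0 ` lrmin_set xs" by (auto simp: shift_def)
  ultimately show ?thesis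
    using lrmin_set_insert_max[OF assms] by (simp add: lrmin_eq_card)
next
  case False
  then show ?thesis
    using lrmin_set_insert_max[OF assms] by (simp add: lrmin_eq_card)
qed

lemma rlmin_insert_max:
  assumes "i \<le> length xs" "\<forall>x\<in>set xs. x < m"
  shows "rlmin (insert_at i m xs) = rlmin xs + (if i = length xs then 1 else 0)"
proof (cases "i = length xs")
  case True
  moreover have "i \<notin> shift i ` rlmin_set xs" by (auto simp: shift_def)
  ultimately show ?thesis
    using rlmin_set_insert_max[OF assms] by (simp add: rlmin_eq_card)
next
  case False
  then show ?thesis
    using rlmin_set_insert_max[OF assms] by (simp add: rlmin_eq_card)
qed

lemma peaks_insert_max:
  assumes "i \<le> length xs" "\<forall>x\<in>set xs. x < m"
  shows "peaks (insert_at i m xs) =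
    card (peak_set xs - {i - 1, i}) + (if 0 < i \<and> i < length xs then 1 else 0)"
proof (cases "0 < i \<and> i < length xs")
  case True
  moreover have "i \<notin> shift i ` (peak_set xs - {i - 1, i})" by (auto simp: shift_def)
  ultimately show ?thesis
    using peak_set_insert_max[OF assms] by (simp add: peaks_eq_card)
next
  case False
  then show ?thesis
    using peak_set_insert_max[OF assms] by (auto simp: peaks_eq_card split: if_split_asm)
qed

lemma peaks_insert_max_end:
  assumes "i = 0 \<or> i = length xs" "\<forall>x\<in>set xs. x < m"
  shows "peaks (insert_at i m xs) = peaks xs"
  using assms(1)
proof
  assume i: "i = 0"
  have "peak_set xs - {0 - 1, 0} = peak_set xs" by (auto dest: peak_set_bounds)
  then show ?thesis using peaks_insert_max[of 0 xs m] assms(2) i by (simp add: peaks_eq_card)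
next
  assume i: "i = length xs"
  have "peak_set xs - {length xs - 1, length xs} = peak_set xs" by (auto dest: peak_set_bounds)
  then show ?thesis
    using peaks_insert_max[of "length xs" xs m] assms(2) i by (simp add: peaks_eq_card)
qed

text \<open>An interior insertion creates a new peak and destroys the peak next to it, if there is one;
  peaks are never adjacent, so at most one peak is destroyed.\<close>

lemma peaks_insert_max_interior:
  assumes "0 < i" "i < length xs" "\<forall>x\<in>set xs. x < m"
  shows "peaks (insert_at i m xs) =
    (if i \<in> peak_set xs \<union> Suc ` peak_set xs then peaks xs else Suc (peaks xs))"
proof -
  have "card (peak_set xs - {i - 1, i}) =
    peaks xs - (if i \<in> peak_set xs \<union> Suc ` peak_set xs then 1 else 0)"
  proof -
    have "peak_set xs \<inter> {i - 1, i} = (if i \<in> peak_set xs then {i} else {})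
        \<union> (if i \<in> Suc ` peak_set xs then {i - 1} else {})"
      using assms(1) by (auto simp: image_iff)
    moreover have "\<not> (i \<in> peak_set xs \<and> i \<in> Suc ` peak_set xs)"
      by (auto dest: Suc_notin_peak_set)
    ultimately have "card (peak_set xs \<inter> {i - 1, i}) =
        (if i \<in> peak_set xs \<union> Suc ` peak_set xs then 1 else 0)"
      by auto
    then show ?thesis by (simp add: card_Diff_subset_Int peaks_eq_card)
  qed
  moreover have "i \<in> peak_set xs \<union> Suc ` peak_set xs \<Longrightarrow> 0 < peaks xs"
    by (auto simp: peaks_eq_card card_gt_0_iff)
  ultimately show ?thesis
    using peaks_insert_max[of i xs m] assms by auto
qed

lemma card_peak_neighbourhood:
  "card (peak_set xs \<union> Suc ` peak_set xs) = 2 * peaks xs"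
proof -
  have "peak_set xs \<inter> Suc ` peak_set xs = {}" by (auto dest: Suc_notin_peak_set)
  then show ?thesis by (simp add: card_Un_disjoint card_image peaks_eq_card)
qed

lemma peak_neighbourhood_subset: "peak_set xs \<union> Suc ` peak_set xs \<subseteq> {1..<length xs}"
  by (auto dest: peak_set_bounds)

section \<open>Permutations as insertions of a new element\<close>

lemma length_permutation: "xs \<in> permutations_of_set A \<Longrightarrow> length xs = card A"
  by (metis distinct_card permutations_of_setD)

lemma bij_betw_insert_at_permutations:
  assumes "finite A" "x \<notin> A"
  shows "bij_betw (\<lambda>(xs, i). insert_at i x xs) (permutations_of_set A \<times> {..card A})
    (permutations_of_set (insert x A))"
  unfolding bij_betw_def
proof
  show "inj_on (\<lambda>(xs, i). insert_at i x xs) (permutations_of_set A \<times> {..card A})"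
  proof (rule inj_onI)
    fix p q
    assume p: "p \<in> permutations_of_set A \<times> {..card A}" and q: "q \<in> permutations_of_set A \<times> {..card A}"
      and eq: "(\<lambda>(xs, i). insert_at i x xs) p = (\<lambda>(xs, i). insert_at i x xs) q"
    obtain xs i ys j where pq: "p = (xs, i)" "q = (ys, j)" by fastforce
    with p q have "xs \<in> permutations_of_set A" "ys \<in> permutations_of_set A"
      and ij: "i \<le> card A" "j \<le> card A" by auto
    then have "x \<notin> set xs" "x \<notin> set ys" "length xs = card A" "length ys = card A"
      using assms(2) by (auto simp: length_permutation dest: permutations_of_setD)
    then show "p = q"
      using insert_at_inject[of i x xs j ys] eq pq ij by auto
  qed
next
  show "(\<lambda>(xs, i). insert_at i x xs) ` (permutations_of_set A \<times> {..card A}) =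
    permutations_of_set (insert x A)"
  proof (intro equalityI subsetI)
    fix t assume "t \<in> (\<lambda>(xs, i). insert_at i x xs) ` (permutations_of_set A \<times> {..card A})"
    then show "t \<in> permutations_of_set (insert x A)"
      using assms(2) by (auto simp: permutations_of_set_def)
  next
    fix t assume t: "t \<in> permutations_of_set (insert x A)"
    then obtain i where i: "i < length t" "t ! i = x"
      by (metis in_set_conv_nth insertI1 permutations_of_setD(1))
    define xs where "xs = take i t @ drop (Suc i) t"
    have t_split: "t = take i t @ x # drop (Suc i) t"
      using id_take_nth_drop[OF i(1)] i(2) by simp
    have t_eq: "t = insert_at i x xs"
      unfolding insert_at_def xs_def using i(1) by (subst t_split) simp
    then have "distinct xs" "x \<notin> set xs" "insert x (set xs) = insert x A"
      using permutations_of_setD[OF t] by auto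
    then have "xs \<in> permutations_of_set A"
      using assms(2) by (auto simp: permutations_of_set_def insert_ident)
    moreover have "i \<le> card A"
      using i(1) length_permutation[OF t] assms by simp
    ultimately show "t \<in> (\<lambda>(xs, i). insert_at i x xs) ` (permutations_of_set A \<times> {..card A})"
      using t_eq by (intro image_eqI[of _ _ "(xs, i)"]) auto
  qed
qed

lemma sum_permutations_insert:
  assumes "finite A" "x \<notin> A"
  shows "(\<Sum>t\<in>permutations_of_set (insert x A). g t) =
    (\<Sum>xs\<in>permutations_of_set A. \<Sum>i\<le>card A. g (insert_at i x xs))"
  using sum.reindex_bij_betw[OF bij_betw_insert_at_permutations[OF assms], of g]
  by (simp add: sum.cartesian_product' case_prod_beta)

section \<open>The weighted peak distribution\<close>

definition min_weight :: "'a::comm_ring_1 \<Rightarrow> 'a \<Rightarrow> nat list \<Rightarrow> 'a" where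
  "min_weight a b xs = a ^ (lrmin xs - 1) * b ^ (rlmin xs - 1)"

lemma sum_insert_max:
  fixes f :: "nat \<Rightarrow> 'a::comm_ring_1"
  assumes xs: "xs \<noteq> []" and m: "\<forall>x\<in>set xs. x < m"
  defines "p \<equiv> peaks xs"
  shows "(\<Sum>i\<le>length xs. f (peaks (insert_at i m xs)) * min_weight a b (insert_at i m xs)) =
    ((a + b + of_nat (2 * p)) * f p + of_nat (length xs - 1 - 2 * p) * f (Suc p)) * min_weight a b xs"
proof -
  define k where "k = length xs"
  define c where "c = min_weight a b xs"
  define P where "P = peak_set xs \<union> Suc ` peak_set xs"
  have k: "1 \<le> k" using xs by (simp add: k_def Suc_le_eq)
  have lr: "0 < lrmin xs" "0 < rlmin xs" using lrmin_pos rlmin_pos xs by auto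
  have first: "f (peaks (insert_at 0 m xs)) * min_weight a b (insert_at 0 m xs) = a * (f p * c)"
    using lr k lrmin_insert_max[of 0 xs m] rlmin_insert_max[of 0 xs m] peaks_insert_max_end[of 0 xs m] m
    by (cases "lrmin xs") (auto simp: min_weight_def c_def p_def k_def mult_ac)
  have last: "f (peaks (insert_at k m xs)) * min_weight a b (insert_at k m xs) = b * (f p * c)"
    using lr k lrmin_insert_max[of k xs m] rlmin_insert_max[of k xs m] peaks_insert_max_end[of k xs m] m
    by (cases "rlmin xs") (auto simp: min_weight_def c_def p_def k_def mult_ac)
  have "(\<Sum>i\<in>{1..<k}. f (peaks (insert_at i m xs)) * min_weight a b (insert_at i m xs)) =
      (\<Sum>i\<in>{1..<k}. if i \<in> P then f p * c else f (Suc p) * c)"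
    using m lrmin_insert_max rlmin_insert_max peaks_insert_max_interior
    by (intro sum.cong) (auto simp: P_def p_def c_def k_def min_weight_def)
  also have "\<dots> = of_nat (card ({1..<k} \<inter> P)) * (f p * c) + of_nat (card ({1..<k} - P)) * (f (Suc p) * c)"
    by (simp add: sum.If_cases Diff_eq)
  also have "{1..<k} \<inter> P = P"
    using peak_neighbourhood_subset by (auto simp: P_def k_def)
  also have "card ({1..<k} - P) = k - 1 - 2 * p"
    using peak_neighbourhood_subset card_peak_neighbourhood
    by (simp add: card_Diff_subset P_def k_def p_def)
  finally have interior:
    "(\<Sum>i\<in>{1..<k}. f (peaks (insert_at i m xs)) * min_weight a b (insert_at i m xs)) =
      of_nat (2 * p) * (f p * c) + of_nat (k - 1 - 2 * p) * (f (Suc p) * c)"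
    using card_peak_neighbourhood by (simp add: P_def p_def)
  have "{..k} = insert 0 (insert k {1..<k})" using k by auto
  then have "(\<Sum>i\<le>k. f (peaks (insert_at i m xs)) * min_weight a b (insert_at i m xs)) =
      a * (f p * c) + (b * (f p * c) +
        (of_nat (2 * p) * (f p * c) + of_nat (k - 1 - 2 * p) * (f (Suc p) * c)))"
    using k first last interior by simp
  then show ?thesis by (simp add: k_def c_def algebra_simps)
qed

definition peak_distribution :: "'a::comm_ring_1 \<Rightarrow> 'a \<Rightarrow> nat \<Rightarrow> nat \<Rightarrow> 'a" where
  "peak_distribution a b n p =
    (\<Sum>\<sigma>\<in>{\<sigma> \<in> permutations_of_set {1..n}. peaks \<sigma> = p}. min_weight a b \<sigma>)"

lemma peak_distribution_Suc:
  fixes a b :: "'a::comm_ring_1"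
  assumes n: "1 \<le> n"
  shows "peak_distribution a b (Suc n) p =
    (a + b + of_nat (2 * p)) * peak_distribution a b n p +
    (if p = 0 then 0 else of_nat (n + 1 - 2 * p) * peak_distribution a b n (p - 1))"
proof -
  let ?S = "permutations_of_set {1..n}"
  define f :: "nat \<Rightarrow> 'a" where "f q = (if q = p then 1 else 0)" for q
  have "{1..Suc n} = insert (Suc n) {1..n}" by auto
  then have "peak_distribution a b (Suc n) p =
      (\<Sum>\<tau>\<in>permutations_of_set (insert (Suc n) {1..n}). f (peaks \<tau>) * min_weight a b \<tau>)"
    by (auto simp: peak_distribution_def sum.inter_filter f_def intro!: sum.cong)
  also have "\<dots> = (\<Sum>xs\<in>?S. \<Sum>i\<le>n.
      f (peaks (insert_at i (Suc n) xs)) * min_weight a b (insert_at i (Suc n) xs))"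
    by (simp add: sum_permutations_insert)
  also have "\<dots> = (\<Sum>xs\<in>?S. ((a + b + of_nat (2 * peaks xs)) * f (peaks xs) +
      of_nat (n - 1 - 2 * peaks xs) * f (Suc (peaks xs))) * min_weight a b xs)"
  proof (rule sum.cong)
    fix xs assume xs: "xs \<in> ?S"
    then have len: "length xs = n" and bound: "\<forall>x\<in>set xs. x < Suc n"
      by (auto simp: length_permutation dest: permutations_of_setD)
    then have "xs \<noteq> []" using n by auto
    then show "(\<Sum>i\<le>n. f (peaks (insert_at i (Suc n) xs)) * min_weight a b (insert_at i (Suc n) xs)) =
      ((a + b + of_nat (2 * peaks xs)) * f (peaks xs) +
        of_nat (n - 1 - 2 * peaks xs) * f (Suc (peaks xs))) * min_weight a b xs"
      using sum_insert_max[of xs "Suc n" f a b] len bound by simp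
  qed simp
  also have "\<dots> = (\<Sum>xs\<in>?S. (a + b + of_nat (2 * p)) * (if peaks xs = p then min_weight a b xs else 0) +
      (if p = 0 then 0 else of_nat (n + 1 - 2 * p) * (if peaks xs = p - 1 then min_weight a b xs else 0)))"
    by (intro sum.cong) (auto simp: f_def algebra_simps)
  also have "\<dots> = (a + b + of_nat (2 * p)) * peak_distribution a b n p +
      (if p = 0 then 0 else of_nat (n + 1 - 2 * p) * peak_distribution a b n (p - 1))"
    by (simp add: peak_distribution_def sum.inter_filter sum.distrib sum_distrib_left)
  finally show ?thesis .
qed

lemma peak_distribution_1: "peak_distribution a b (Suc 0) p = (if p = 0 then 1 else 0)"
proof -
  have "lrmin_set [1] = {0}" "rlmin_set [1] = {0}" "peak_set [1] = {}"
    by (auto simp: lrmin_set_def rlmin_set_def peak_set_def)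
  then have "peaks [1] = 0" "lrmin [1] = 1" "rlmin [1] = 1"
    by (simp_all add: peaks_eq_card lrmin_eq_card rlmin_eq_card)
  moreover have "{\<sigma> \<in> permutations_of_set {1..Suc 0}. peaks \<sigma> = p} = (if p = 0 then {[1]} else {})"
    using calculation(1) by auto
  ultimately show ?thesis by (simp add: peak_distribution_def min_weight_def)
qed

lemma binomial_half_identity:
  "(Suc n div 2 choose Suc q) + (2 * q + 1) * (n div 2 choose Suc q) = (n - 2 * q) * (n div 2 choose q)"
proof -
  define m where "m = n div 2"
  have absorb: "Suc q * (m choose Suc q) = (m - q) * (m choose q)"
    by (simp only: binomial_absorption binomial_absorb_comp)
  show ?thesis
  proof (cases "even n")
    case True
    then have "n = 2 * m" "Suc n div 2 = m" by (auto simp: m_def)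
    then show ?thesis using absorb unfolding m_def[symmetric]
      by (simp add: algebra_simps diff_mult_distrib2)
  next
    case False
    then have n: "n = 2 * m + 1" "Suc n div 2 = Suc m" by (auto simp: m_def)
    have "(Suc m choose Suc q) + (2 * q + 1) * (m choose Suc q) = (m choose q) + 2 * (Suc q * (m choose Suc q))"
      by (simp add: algebra_simps)
    also have "\<dots> = (1 + 2 * (m - q)) * (m choose q)"
      unfolding absorb by (simp add: distrib_right mult.assoc)
    also have "\<dots> = (n - 2 * q) * (m choose q)"
    proof (cases "q \<le> m")
      case True
      then have "n - 2 * q = 1 + 2 * (m - q)" using n by linarith
      then show ?thesis by simp
    qed (simp add: binomial_eq_0)
    finally show ?thesis using n unfolding m_def[symmetric] by simp
  qed
qed

lemma peak_distribution_closed_form: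
  fixes a b :: "'a::comm_ring_1"
  assumes ab: "a + b = -1"
  shows "peak_distribution a b (Suc n) p = (-1) ^ (n + p) * of_nat (n div 2 choose p)"
proof (induction n arbitrary: p)
  case 0
  then show ?case by (cases p) (simp_all add: peak_distribution_1)
next
  case (Suc n)
  note IH = Suc.IH
  show ?case
  proof (cases p)
    case 0
    then show ?thesis using peak_distribution_Suc[of "Suc n" a b 0] IH[of 0] ab by simp
  next
    case (Suc q)
    define s :: 'a where "s = (-1) ^ (n + q)"
    have "of_nat (Suc n div 2 choose Suc q) + of_nat (2 * q + 1) * of_nat (n div 2 choose Suc q) =
        (of_nat (n - 2 * q) * of_nat (n div 2 choose q) :: 'a)"
      by (simp only: of_nat_mult[symmetric] of_nat_add[symmetric] binomial_half_identity)
    then have binom: "of_nat (n - 2 * q) * of_nat (n div 2 choose q) -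
        of_nat (2 * q + 1) * of_nat (n div 2 choose Suc q) = (of_nat (Suc n div 2 choose Suc q) :: 'a)"
      by (simp add: diff_eq_eq)
    have coeff: "a + b + of_nat (2 * p) = (of_nat (2 * q + 1) :: 'a)"
      using ab Suc by (simp add: algebra_simps)
    have "peak_distribution a b (Suc (Suc n)) p =
        of_nat (2 * q + 1) * peak_distribution a b (Suc n) p +
        of_nat (n - 2 * q) * peak_distribution a b (Suc n) q"
      using peak_distribution_Suc[of "Suc n" a b p, unfolded coeff] Suc by simp
    also have "\<dots> = of_nat (2 * q + 1) * (- s * of_nat (n div 2 choose Suc q)) +
        of_nat (n - 2 * q) * (s * of_nat (n div 2 choose q))"
      using IH[of p] IH[of q] Suc by (simp add: s_def)
    also have "\<dots> = s * (of_nat (n - 2 * q) * of_nat (n div 2 choose q) -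
        of_nat (2 * q + 1) * of_nat (n div 2 choose Suc q))"
      by (simp add: algebra_simps)
    also have "\<dots> = (-1) ^ (Suc n + p) * of_nat (Suc n div 2 choose p)"
      using binom Suc by (simp add: s_def)
    finally show ?thesis .
  qed
qed

lemma sum_permutations_by_peaks:
  "(\<Sum>\<sigma>\<in>permutations_of_set {1..n}. u ^ peaks \<sigma> * min_weight a b \<sigma>) =
    (\<Sum>p\<le>n. u ^ p * peak_distribution a b n p)"
proof -
  have "peaks \<sigma> \<le> n" if "\<sigma> \<in> permutations_of_set {1..n}" for \<sigma>
  proof -
    have "peaks \<sigma> \<le> card {..<length \<sigma>}"
      unfolding peaks_eq_card by (rule card_mono) (auto dest: peak_set_bounds)
    then show ?thesis using length_permutation[OF that] by simp
  qed
  then have "(\<Sum>p\<le>n. \<Sum>\<sigma>\<in>{\<sigma> \<in> permutations_of_set {1..n}. peaks \<sigma> = p}. u ^ peaks \<sigma> * min_weight a b \<sigma>) =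
      (\<Sum>\<sigma>\<in>permutations_of_set {1..n}. u ^ peaks \<sigma> * min_weight a b \<sigma>)"
    by (intro sum.group) auto
  then show ?thesis
    by (simp add: peak_distribution_def sum_distrib_left)
qed

lemma sum_signed_binomial:
  fixes u :: "'a::comm_ring_1"
  assumes "j \<le> N"
  shows "(\<Sum>p\<le>N. u ^ p * ((-1) ^ (n + p) * of_nat (j choose p))) = (-1) ^ n * (1 - u) ^ j"
proof -
  have "(\<Sum>p\<le>N. u ^ p * ((-1) ^ (n + p) * of_nat (j choose p))) =
      (\<Sum>p\<le>j. u ^ p * ((-1) ^ (n + p) * of_nat (j choose p)))"
    using assms by (intro sum.mono_neutral_right) (auto simp: binomial_eq_0)
  also have "\<dots> = (-1) ^ n * (\<Sum>p\<le>j. of_nat (j choose p) * (- u) ^ p * 1 ^ (j - p))"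
    by (simp add: sum_distrib_left power_add power_minus[of u] mult_ac)
  also have "\<dots> = (-1) ^ n * (1 - u) ^ j"
    using binomial_ring[of "- u" 1 j] by simp
  finally show ?thesis .
qed

theorem theorem1p6:
  fixes \<alpha> \<beta> u :: "'a :: comm_ring_1" and n :: nat
  assumes "\<alpha> + \<beta> = -1" and "n \<ge> 1"
  shows "(\<Sum>\<sigma>\<in>permutations_of_set {1..n+1}.
            u ^ peaks \<sigma> * \<alpha> ^ (lrmin \<sigma> - 1) * \<beta> ^ (rlmin \<sigma> - 1))
         = (if even n then (1 - u) ^ (n div 2) else - ((1 - u) ^ (n div 2)))"
proof -
  have "(\<Sum>\<sigma>\<in>permutations_of_set {1..n+1}.
            u ^ peaks \<sigma> * \<alpha> ^ (lrmin \<sigma> - 1) * \<beta> ^ (rlmin \<sigma> - 1)) =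
      (\<Sum>p\<le>n + 1. u ^ p * peak_distribution \<alpha> \<beta> (Suc n) p)"
    using sum_permutations_by_peaks[where n = "n + 1" and u = u and a = \<alpha> and b = \<beta>] by (simp add: min_weight_def mult.assoc)
  also have "\<dots> = (\<Sum>p\<le>n + 1. u ^ p * ((-1) ^ (n + p) * of_nat (n div 2 choose p)))"
    by (simp add: peak_distribution_closed_form[OF assms(1)])
  also have "\<dots> = (-1) ^ n * (1 - u) ^ (n div 2)"
    by (rule sum_signed_binomial) simp
  finally show ?thesis by simp
qed

end
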